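(* Let $f:[0,T]\times\mathbb{R}^d\times U\to\mathbb{R}^d$ be the dynamics of an individual agent, $U\subset\mathbb{R}^m$, and let $\alpha:\mathbb{R}\to\mathbb{R}$ be a strictly increasing smooth function with $\alpha(0)=0$. Let $\mathcal{H}(s,\rho)$ be a real-valued functional of time $s$ and of a probability density $\rho$ on $\mathbb{R}^d$, with partial time derivative $\partial_s\mathcal{H}$ and Fréchet derivative $\delta_\rho\mathcal{H}(s,\rho)$ (a function of $x\in\mathbb{R}^d$) with respect to $\rho$. For $s\ge 0$ and a density $\rho$ define $$\mathcal{K}_{\mathrm{CBF}}(s,\rho)=\Big\{ q ~:~ \int_{\mathbb{R}^d} \nabla \delta_\rho \mathcal{H}(s,\rho)(x)\cdot f(s,x,q(x))\,\rho(x)\,dx \geq -\partial_s \mathcal{H}(s,\rho) -\alpha\big(\mathcal{H}(s,\rho)\big)\Big\}.$$ Assume the swarm adopts a policy function $q(s,\cdot)$ so that its density $\rho(s,\cdot)$ evolves according to the continuity equation $$\partial_s \rho(s,x) + \nabla \cdot \big(\rho(s,x)f(s,x,q(s,x))\big) = 0,\qquad \rho(0,x)=\rho_0(x).$$ Then the condition $$\frac{d}{ds}\mathcal{H}(s,\rho(s,\cdot))\geq -\alpha\big(\mathcal{H}(s,\rho(s,\cdot))\big)\quad\text{for all } s\geq 0$$ is equivalent to $$q(s,\cdot) \in \mathcal{K}_{\mathrm{CBF}}(s,\rho(s,\cdot))\quad \text{for all } s\geq 0.$$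
   Context: Mean-field setting: a population of agents in $\mathbb{R}^d$, each following $\partial_s z(s)=f(s,z(s),u(s))$, is described by its distribution $\rho(s,\cdot)$ (identified with its density); all agents use the same feedback policy $u=q(s,z)$. $\nabla$ denotes the gradient in $x$ and $\nabla\cdot$ the divergence in $x$. Standing regularity assumptions of the paper: the continuity equation is well-posed and everything is smooth enough for the differential calculus (including the chain rule $\frac{d}{ds}\mathcal{H}(s,\rho(s,\cdot))=\partial_s\mathcal{H}+\int \delta_\rho\mathcal{H}\,\partial_s\rho\,dx$), and $\rho(s,\cdot)$ decays fast enough at infinity (e.g. is compactly supported, as ensured by a fast-decaying $\rho_0$ and Lipschitz $q(s,\cdot)$) so that integration by parts produces no boundary terms. *)

theory Defs
  imports "HOL-Analysis.Analysis"
begin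

definition grad :: "('a::euclidean_space \<Rightarrow> real) \<Rightarrow> 'a \<Rightarrow> 'a" where
  "grad g x = (\<Sum>i\<in>Basis. frechet_derivative g (at x) i *\<^sub>R i)"

definition divergence :: "('a::euclidean_space \<Rightarrow> 'a) \<Rightarrow> 'a \<Rightarrow> real" where
  "divergence F x = (\<Sum>i\<in>Basis. frechet_derivative F (at x) i \<bullet> i)"

text \<open>The admissible set K_CBF(s, rho). H s r is the functional, dsH s r its partial time
  derivative, dH s r its Frechet derivative w.r.t. the density (a function of x).\<close>

definition K_CBF ::
  "(real \<Rightarrow> ('a::euclidean_space \<Rightarrow> real) \<Rightarrow> real) \<Rightarrow>
   (real \<Rightarrow> ('a \<Rightarrow> real) \<Rightarrow> real) \<Rightarrow>
   (real \<Rightarrow> ('a \<Rightarrow> real) \<Rightarrow> 'a \<Rightarrow> real) \<Rightarrow>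
   (real \<Rightarrow> real) \<Rightarrow> (real \<Rightarrow> 'a \<Rightarrow> 'u \<Rightarrow> 'a) \<Rightarrow>
   real \<Rightarrow> ('a \<Rightarrow> real) \<Rightarrow> ('a \<Rightarrow> 'u) set" where
  "K_CBF H dsH dH \<alpha> f s r =
     {q. (LINT x|lborel. (grad (dH s r) x \<bullet> f s x (q x)) * r x) \<ge> - dsH s r - \<alpha> (H s r)}"

end

theory Submission
  imports Defs
begin

text \<open>Along the continuity equation the chain rule gives
  \<open>d/ds H(s, \<rho>) = \<partial>\<^sub>s H - \<integral> \<delta>H \<nabla>\<cdot>(\<rho> f) dx\<close>, and integrating by parts (no boundary term) turns this
  into \<open>\<partial>\<^sub>s H + \<integral> \<nabla>\<delta>H \<cdot> f \<rho> dx\<close>. Hence for every \<open>s\<close> the two conditions are literally the same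
  inequality.\<close>

lemma at_within_atLeast_neq_bot:
  fixes a s :: real
  assumes "a \<le> s"
  shows "at s within {a..} \<noteq> bot"
proof -
  have "at_right s \<le> at s within {a..}"
    using assms by (intro at_le) auto
  then show ?thesis
    using trivial_limit_at_right_real bot_unique by metis
qed

lemma vector_derivative_within_atLeast:
  fixes f :: "real \<Rightarrow> real"
  assumes "a \<le> s" and "(f has_real_derivative D) (at s within {a..})"
  shows "vector_derivative f (at s within {a..}) = D"
  using assms
  by (intro vector_derivative_within at_within_atLeast_neq_bot)
     (simp_all add: has_real_derivative_iff_has_vector_derivative)

lemma divergence_scaleR:
  fixes g :: "'a::euclidean_space \<Rightarrow> real" and F :: "'a \<Rightarrow> 'a"
  assumes g: "g differentiable (at x)" and F: "F differentiable (at x)"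
  shows "divergence (\<lambda>y. g y *\<^sub>R F y) x = grad g x \<bullet> F x + g x * divergence F x"
proof -
  let ?g' = "frechet_derivative g (at x)" and ?F' = "frechet_derivative F (at x)"
  have "((\<lambda>y. g y *\<^sub>R F y) has_derivative (\<lambda>h. g x *\<^sub>R ?F' h + ?g' h *\<^sub>R F x)) (at x)"
    using g F by (intro has_derivative_scaleR) (simp_all add: frechet_derivative_works)
  then have "frechet_derivative (\<lambda>y. g y *\<^sub>R F y) (at x) = (\<lambda>h. g x *\<^sub>R ?F' h + ?g' h *\<^sub>R F x)"
    by (rule frechet_derivative_at[symmetric])
  then have "divergence (\<lambda>y. g y *\<^sub>R F y) x = (\<Sum>i\<in>Basis. g x * (?F' i \<bullet> i) + ?g' i * (F x \<bullet> i))"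
    unfolding divergence_def by (simp add: inner_add_left)
  also have "\<dots> = g x * divergence F x + grad g x \<bullet> F x"
    unfolding divergence_def grad_def
    by (simp add: sum.distrib sum_distrib_left inner_sum_left inner_sum_right inner_commute[of _ "F x"])
  finally show ?thesis by simp
qed

lemma integral_grad_inner_eq_neg_integral_divergence:
  fixes g :: "'a::euclidean_space \<Rightarrow> real" and F :: "'a \<Rightarrow> 'a" and M :: "'a measure"
  assumes "\<And>x. g differentiable (at x)" and "\<And>x. F differentiable (at x)"
    and "integrable M (\<lambda>x. g x * divergence F x)"
    and "integrable M (divergence (\<lambda>y. g y *\<^sub>R F y))"
    and "(LINT x|M. divergence (\<lambda>y. g y *\<^sub>R F y) x) = 0"
  shows "(LINT x|M. grad g x \<bullet> F x) = - (LINT x|M. g x * divergence F x)"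
proof -
  have "grad g x \<bullet> F x = divergence (\<lambda>y. g y *\<^sub>R F y) x - g x * divergence F x" for x
    using divergence_scaleR[OF assms(1,2)] by simp
  then show ?thesis
    using Bochner_Integration.integral_diff[OF assms(4,3)] assms(5) by simp
qed

theorem theorem2:
  fixes f :: "real \<Rightarrow> 'a::euclidean_space \<Rightarrow> 'u::euclidean_space \<Rightarrow> 'a"
    and U :: "'u set"
    and \<alpha> :: "real \<Rightarrow> real"
    and H :: "real \<Rightarrow> ('a \<Rightarrow> real) \<Rightarrow> real"
    and dsH :: "real \<Rightarrow> ('a \<Rightarrow> real) \<Rightarrow> real"
    and dH :: "real \<Rightarrow> ('a \<Rightarrow> real) \<Rightarrow> 'a \<Rightarrow> real"
    and q :: "real \<Rightarrow> 'a \<Rightarrow> 'u"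
    and \<rho> :: "real \<Rightarrow> 'a \<Rightarrow> real"
    and \<rho>0 :: "'a \<Rightarrow> real"
  assumes alpha_mono: "strict_mono \<alpha>"
    and alpha_zero: "\<alpha> 0 = 0"
    and alpha_smooth: "\<And>n x. ((deriv ^^ n) \<alpha>) differentiable (at x)"
    and q_in_U: "\<And>s x. s \<ge> 0 \<Longrightarrow> q s x \<in> U"
    and dsH_deriv: "\<And>s r. s \<ge> 0 \<Longrightarrow>
         ((\<lambda>t. H t r) has_real_derivative dsH s r) (at s within {0..})"
    and rho_init: "\<rho> 0 = \<rho>0"
    and rho_density: "\<And>s x. s \<ge> 0 \<Longrightarrow> \<rho> s x \<ge> 0"
    and rho_integrable: "\<And>s. s \<ge> 0 \<Longrightarrow> integrable lborel (\<rho> s)"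
    and rho_mass: "\<And>s. s \<ge> 0 \<Longrightarrow> (LINT x|lborel. \<rho> s x) = 1"
    and flux_diff: "\<And>s x. s \<ge> 0 \<Longrightarrow>
         (\<lambda>y. \<rho> s y *\<^sub>R f s y (q s y)) differentiable (at x)"
    and continuity_eq: "\<And>s x. s \<ge> 0 \<Longrightarrow>
         ((\<lambda>t. \<rho> t x) has_real_derivative
            (- divergence (\<lambda>y. \<rho> s y *\<^sub>R f s y (q s y)) x)) (at s within {0..})"
    and chain_rule: "\<And>s. s \<ge> 0 \<Longrightarrow>
         ((\<lambda>t. H t (\<rho> t)) has_real_derivative
            (dsH s (\<rho> s) +
             (LINT x|lborel. dH s (\<rho> s) x * vector_derivative (\<lambda>t. \<rho> t x) (at s within {0..}))))
         (at s within {0..})"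
    and dH_diff: "\<And>s x. s \<ge> 0 \<Longrightarrow> dH s (\<rho> s) differentiable (at x)"
    and int1: "\<And>s. s \<ge> 0 \<Longrightarrow>
         integrable lborel (\<lambda>x. dH s (\<rho> s) x * divergence (\<lambda>y. \<rho> s y *\<^sub>R f s y (q s y)) x)"
    and int2: "\<And>s. s \<ge> 0 \<Longrightarrow>
         integrable lborel (\<lambda>x. (grad (dH s (\<rho> s)) x \<bullet> f s x (q s x)) * \<rho> s x)"
    and int3: "\<And>s. s \<ge> 0 \<Longrightarrow>
         integrable lborel (\<lambda>x. divergence (\<lambda>y. dH s (\<rho> s) y *\<^sub>R (\<rho> s y *\<^sub>R f s y (q s y))) x)"
    and no_boundary: "\<And>s. s \<ge> 0 \<Longrightarrow>
         (LINT x|lborel. divergence (\<lambda>y. dH s (\<rho> s) y *\<^sub>R (\<rho> s y *\<^sub>R f s y (q s y))) x) = 0"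
  shows "(\<forall>s\<ge>0. vector_derivative (\<lambda>t. H t (\<rho> t)) (at s within {0..}) \<ge> - \<alpha> (H s (\<rho> s)))
     \<longleftrightarrow> (\<forall>s\<ge>0. q s \<in> K_CBF H dsH dH \<alpha> f s (\<rho> s))"
proof -
  have derivative_along_flow:
    "vector_derivative (\<lambda>t. H t (\<rho> t)) (at s within {0..}) =
       dsH s (\<rho> s) + (LINT x|lborel. (grad (dH s (\<rho> s)) x \<bullet> f s x (q s x)) * \<rho> s x)"
    if s: "s \<ge> 0" for s
  proof -
    let ?F = "\<lambda>y. \<rho> s y *\<^sub>R f s y (q s y)"
    have "vector_derivative (\<lambda>t. H t (\<rho> t)) (at s within {0..}) =
        dsH s (\<rho> s) + (LINT x|lborel. dH s (\<rho> s) x * vector_derivative (\<lambda>t. \<rho> t x) (at s within {0..}))"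
      using s chain_rule[OF s] by (rule vector_derivative_within_atLeast)
    also have "\<dots> = dsH s (\<rho> s) - (LINT x|lborel. dH s (\<rho> s) x * divergence ?F x)"
      using vector_derivative_within_atLeast[OF s continuity_eq[OF s]] by simp
    also have "\<dots> = dsH s (\<rho> s) + (LINT x|lborel. grad (dH s (\<rho> s)) x \<bullet> ?F x)"
      using integral_grad_inner_eq_neg_integral_divergence[OF
        dH_diff[OF s] flux_diff[OF s] int1[OF s] int3[OF s] no_boundary[OF s]] by simp
    finally show ?thesis
      by (simp add: mult.commute)
  qed
  then show ?thesis
    unfolding K_CBF_def by auto
qed

end
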